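(* Let $X$ be an infinite-dimensional Polish topological vector space, $\mathcal F\subset2^{\mathbb N}$ a Furstenberg family, and $T\in\mathfrak L(X)$ hereditarily $\mathcal F$-hypercyclic. Then for every countable family $(A_i)_{i\in I}\subset\mathcal F$ and every family $(V_i)_{i\in I}$ of non-empty open subsets of $X$, the set of $x\in X$ such that $\mathcal N_T(x,V_i)\cap A_i\in\mathcal F$ for all $i\in I$ is dense in $X$.
   Context: A Furstenberg family is a family of non-empty subsets of $\mathbb N$ hereditary upwards. $\mathcal N_T(x,V):=\{n\in\mathbb N:T^nx\in V\}$. $T$ is hereditarily $\mathcal F$-hypercyclic if for every countable family $(V_i)_{i\in I}$ of non-empty open sets and every family $(A_i)_{i\in I}\subset\mathcal F$, there exists $x$ with $\mathcal N_T(x,V_i)\cap A_i\in\mathcal F$ for all $i\in I$. *)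

theory Defs
  imports "HOL-Analysis.Analysis"
begin

definition furstenberg_family :: "nat set set \<Rightarrow> bool" where
  "furstenberg_family \<F> \<longleftrightarrow>
     (\<forall>A\<in>\<F>. A \<noteq> {}) \<and> (\<forall>A B. A \<in> \<F> \<longrightarrow> A \<subseteq> B \<longrightarrow> B \<in> \<F>)"

definition return_set :: "('a \<Rightarrow> 'a) \<Rightarrow> 'a \<Rightarrow> 'a set \<Rightarrow> nat set" where
  "return_set T x V = {n. (T ^^ n) x \<in> V}"

text \<open>Countable families are indexed by subsets I of the naturals.\<close>
definition hered_F_hypercyclic ::
    "nat set set \<Rightarrow> ('a::topological_space \<Rightarrow> 'a) \<Rightarrow> bool" where
  "hered_F_hypercyclic \<F> T \<longleftrightarrow>
     (\<forall>(I::nat set) (V::nat \<Rightarrow> 'a set) (A::nat \<Rightarrow> nat set).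
        (\<forall>i\<in>I. open (V i) \<and> V i \<noteq> {} \<and> A i \<in> \<F>) \<longrightarrow>
        (\<exists>x. \<forall>i\<in>I. return_set T x (V i) \<inter> A i \<in> \<F>))"

definition tvs_ops_continuous :: "'a::{real_vector, topological_space} itself \<Rightarrow> bool" where
  "tvs_ops_continuous _ \<longleftrightarrow>
     continuous_on UNIV (\<lambda>p::'a \<times> 'a. fst p + snd p) \<and>
     continuous_on UNIV (\<lambda>p::real \<times> 'a. fst p *\<^sub>R snd p)"

definition infinite_dimensional :: "'a::real_vector itself \<Rightarrow> bool" where
  "infinite_dimensional _ \<longleftrightarrow> \<not> (\<exists>B::'a set. finite B \<and> span B = UNIV)"

end

theory Submission
  imports Defs
begin

text \<open>Applying hereditary \<open>\<F>\<close>-hypercyclicity to all basic open sets, with \<open>A = \<nat>\<close>,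
  gives a vector \<open>y\<close> with dense orbit. Nonempty open sets of a nontrivial topological
  vector space are infinite, so the orbit of \<open>y\<close> visits each of them at arbitrarily late
  times; hence every \<open>T\<^sup>n\<close> has dense range and all preimages \<open>(T\<^sup>n)\<^sup>-\<^sup>1(V\<^sub>i)\<close> are nonempty
  and open. Given a nonempty open \<open>S\<close>, apply hereditary \<open>\<F>\<close>-hypercyclicity to the countable
  family of pairs \<open>((T\<^sup>n)\<^sup>-\<^sup>1(V\<^sub>i), A\<^sub>i)\<close> for all \<open>i, n\<close>, together with \<open>(S, \<nat>)\<close>: the resulting
  vector \<open>y\<close> has an iterate \<open>T\<^sup>m y \<in> S\<close>, and \<open>N(T\<^sup>m y, V\<^sub>i) = N(y, (T\<^sup>m)\<^sup>-\<^sup>1(V\<^sub>i))\<close>, so \<open>T\<^sup>m y\<close>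
  lies in the set in question.\<close>

definition hypercyclic_vector :: "('a::topological_space \<Rightarrow> 'a) \<Rightarrow> 'a \<Rightarrow> bool" where
  "hypercyclic_vector T y \<longleftrightarrow> (\<forall>U. open U \<longrightarrow> U \<noteq> {} \<longrightarrow> return_set T y U \<noteq> {})"

lemma funpow_swap: "(f ^^ m) ((f ^^ k) y) = (f ^^ k) ((f ^^ m) y)"
  by (metis funpow_add add.commute o_apply)

lemma return_set_funpow: "return_set T ((T ^^ m) x) V = return_set T x ((T ^^ m) -` V)"
  unfolding return_set_def by (simp only: vimage_eq funpow_swap[of m T])

lemma continuous_on_funpow:
  fixes T :: "'a::topological_space \<Rightarrow> 'a"
  assumes "continuous_on UNIV T"
  shows "continuous_on UNIV (T ^^ n)"
proof (induction n)
  case 0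
  show ?case
    by simp
next
  case (Suc n)
  then show ?case
    using continuous_on_compose[OF Suc continuous_on_subset[OF assms]] by simp
qed

lemma furstenberg_family_UNIV:
  assumes "furstenberg_family \<F>" and "\<F> \<noteq> {}"
  shows "UNIV \<in> \<F>"
  using assms unfolding furstenberg_family_def by blast

lemma furstenberg_family_nonempty:
  assumes "furstenberg_family \<F>" and "B \<in> \<F>"
  shows "B \<noteq> {}"
  using assms unfolding furstenberg_family_def by blast

lemma hered_F_hypercyclicD:
  fixes J :: "'j set" and V :: "'j \<Rightarrow> 'a::topological_space set"
  assumes "hered_F_hypercyclic \<F> T" and "countable J"
    and "\<forall>j\<in>J. open (V j) \<and> V j \<noteq> {} \<and> A j \<in> \<F>"
  shows "\<exists>x. \<forall>j\<in>J. return_set T x (V j) \<inter> A j \<in> \<F>"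
proof (cases "J = {}")
  case True
  then show ?thesis by simp
next
  case False
  define f where "f = from_nat_into J"
  have "f n \<in> J" for n
    unfolding f_def using False by (rule from_nat_into)
  then obtain x where x: "\<forall>n\<in>UNIV. return_set T x (V (f n)) \<inter> A (f n) \<in> \<F>"
    using assms(1,3) unfolding hered_F_hypercyclic_def
    by (elim allE[of _ UNIV] allE[of _ "V \<circ> f"] allE[of _ "A \<circ> f"]) auto
  show ?thesis
  proof (intro exI ballI)
    fix j
    assume "j \<in> J"
    then have "f (to_nat_on J j) = j"
      unfolding f_def using assms(2) by (simp add: from_nat_into_to_nat_on)
    then show "return_set T x (V j) \<inter> A j \<in> \<F>"
      using x by (metis UNIV_I)
  qed
qed

lemma hered_F_hypercyclic_imp_hypercyclic_vector:
  fixes T :: "'a::second_countable_topology \<Rightarrow> 'a"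
  assumes "hered_F_hypercyclic \<F> T" and "furstenberg_family \<F>" and "\<F> \<noteq> {}"
  shows "\<exists>y. hypercyclic_vector T y"
proof -
  obtain \<B> :: "'a set set" where \<B>: "countable \<B>" "topological_basis \<B>"
    using ex_countable_basis by blast
  have "countable (\<B> - {{}})"
    using \<B>(1) by simp
  moreover have "\<forall>b\<in>\<B> - {{}}. open b \<and> b \<noteq> {} \<and> UNIV \<in> \<F>"
    using topological_basis_open[OF \<B>(2)] furstenberg_family_UNIV[OF assms(2,3)] by blast
  ultimately obtain y where y: "\<forall>b\<in>\<B> - {{}}. return_set T y b \<inter> UNIV \<in> \<F>"
    using hered_F_hypercyclicD[OF assms(1), where V="\<lambda>b. b" and A="\<lambda>_. UNIV"] by blast
  have "return_set T y U \<noteq> {}" if "open U" "U \<noteq> {}" for U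
  proof -
    obtain u where "u \<in> U"
      using \<open>U \<noteq> {}\<close> by blast
    then obtain b where "b \<in> \<B>" "u \<in> b" "b \<subseteq> U"
      using topological_basisE[OF \<B>(2) \<open>open U\<close>] by blast
    then have "return_set T y b \<noteq> {}"
      using y furstenberg_family_nonempty[OF assms(2)] by blast
    then show ?thesis
      using \<open>b \<subseteq> U\<close> unfolding return_set_def by blast
  qed
  then show ?thesis
    unfolding hypercyclic_vector_def by blast
qed

lemma tvs_continuous_on_line:
  assumes "tvs_ops_continuous TYPE('a::{real_vector, topological_space})"
  shows "continuous_on UNIV (\<lambda>t::real. x + t *\<^sub>R (e::'a))"
proof -
  have add: "continuous_on UNIV (\<lambda>p::'a \<times> 'a. fst p + snd p)"
    and scale: "continuous_on UNIV (\<lambda>p::real \<times> 'a. fst p *\<^sub>R snd p)"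
    using assms unfolding tvs_ops_continuous_def by auto
  have "continuous_on UNIV (\<lambda>t::real. t *\<^sub>R e)"
    using continuous_on_compose[of UNIV "\<lambda>t. (t, e)", OF _ continuous_on_subset[OF scale]]
    by (simp add: o_def continuous_on_Pair)
  then show ?thesis
    using continuous_on_compose[of UNIV "\<lambda>t. (x, t *\<^sub>R e)", OF _ continuous_on_subset[OF add]]
    by (simp add: o_def continuous_on_Pair)
qed

lemma tvs_open_nonempty_infinite:
  fixes U :: "'a::{real_vector, topological_space} set"
  assumes "tvs_ops_continuous TYPE('a)" and "e \<noteq> (0::'a)"
    and "open U" and "U \<noteq> {}"
  shows "infinite U"
proof -
  obtain x where "x \<in> U"
    using assms(4) by blast
  define g where "g = (\<lambda>t::real. x + t *\<^sub>R e)"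
  have "open (g -` U)"
    using open_vimage[OF assms(3) tvs_continuous_on_line[OF assms(1)]] by (simp add: g_def)
  moreover have "0 \<in> g -` U"
    using \<open>x \<in> U\<close> by (simp add: g_def)
  ultimately have "infinite (g -` U)"
    using finite_imp_not_open by blast
  moreover have "inj g"
    unfolding g_def inj_def using assms(2) by auto
  ultimately have "infinite (g ` (g -` U))"
    using finite_imageD inj_on_subset by blast
  then show ?thesis
    using finite_subset[OF image_vimage_subset] by blast
qed

lemma infinite_dimensional_ex_nonzero:
  assumes "infinite_dimensional TYPE('a::real_vector)"
  shows "\<exists>e::'a. e \<noteq> 0"
proof (rule ccontr)
  assume "\<nexists>e::'a. e \<noteq> 0"
  then have "span {} = (UNIV::'a set)"
    by auto
  then show False
    using assms unfolding infinite_dimensional_def by blast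
qed

lemma hypercyclic_vector_return_set_infinite:
  fixes T :: "'a::t1_space \<Rightarrow> 'a"
  assumes "hypercyclic_vector T y"
    and open_infinite: "\<And>U::'a set. open U \<Longrightarrow> U \<noteq> {} \<Longrightarrow> infinite U"
    and "open U" and "U \<noteq> {}"
  shows "infinite (return_set T y U)"
  unfolding infinite_nat_iff_unbounded_le
proof
  fix m
  define P where "P = (\<lambda>k. (T ^^ k) y) ` {..<m}"
  have "finite P"
    unfolding P_def by simp
  then have "open (U - P)" "U - P \<noteq> {}"
    using assms(3,4) open_infinite[OF assms(3,4)] by (auto intro: finite_imp_closed finite_subset)
  then obtain k where "(T ^^ k) y \<in> U" "(T ^^ k) y \<notin> P"
    using assms(1) unfolding hypercyclic_vector_def return_set_def by blast
  moreover from this(2) have "k \<ge> m"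
    unfolding P_def by (auto simp: not_le[symmetric])
  ultimately show "\<exists>k\<ge>m. k \<in> return_set T y U"
    unfolding return_set_def by blast
qed

lemma funpow_vimage_nonempty:
  assumes "infinite (return_set T y U)"
  shows "(T ^^ n) -` U \<noteq> {}"
proof -
  obtain k where "k \<ge> n" "(T ^^ k) y \<in> U"
    using assms unfolding infinite_nat_iff_unbounded_le return_set_def by blast
  then have "(T ^^ n) ((T ^^ (k - n)) y) \<in> U"
    by (metis funpow_add le_add_diff_inverse o_apply)
  then show ?thesis
    by blast
qed

lemma closure_eq_UNIV_if_meets_open:
  assumes "\<And>S. open S \<Longrightarrow> S \<noteq> {} \<Longrightarrow> S \<inter> D \<noteq> {}"
  shows "closure D = UNIV"
  using assms[of "- closure D"] closure_subset by (auto simp: open_Compl)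

lemma hered_F_hypercyclic_dense:
  fixes T :: "'a::topological_space \<Rightarrow> 'a" and I :: "'i set"
  assumes "hered_F_hypercyclic \<F> T" and "furstenberg_family \<F>" and "UNIV \<in> \<F>"
    and "continuous_on UNIV T"
    and dense_range: "\<And>n U. open U \<Longrightarrow> U \<noteq> {} \<Longrightarrow> (T ^^ n) -` U \<noteq> {}"
    and "countable I" and "\<forall>i\<in>I. open (V i) \<and> V i \<noteq> {} \<and> A i \<in> \<F>"
  shows "closure {x. \<forall>i\<in>I. return_set T x (V i) \<inter> A i \<in> \<F>} = UNIV"
proof (rule closure_eq_UNIV_if_meets_open)
  fix S :: "'a set"
  assume "open S" "S \<noteq> {}"
  define J where "J = Inl ` (I \<times> (UNIV :: nat set)) \<union> {Inr ()}"
  define W where "W = case_sum (\<lambda>(i, n). (T ^^ n) -` V i) (\<lambda>_::unit. S)"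
  define B where "B = case_sum (\<lambda>(i, n::nat). A i) (\<lambda>_::unit. UNIV)"
  have "countable J"
    unfolding J_def using assms(6) by simp
  moreover have "\<forall>j\<in>J. open (W j) \<and> W j \<noteq> {} \<and> B j \<in> \<F>"
    using assms(3,7) \<open>open S\<close> \<open>S \<noteq> {}\<close> dense_range
      open_vimage[OF _ continuous_on_funpow[OF assms(4)]]
    unfolding J_def W_def B_def by auto
  ultimately obtain y where y: "\<forall>j\<in>J. return_set T y (W j) \<inter> B j \<in> \<F>"
    using hered_F_hypercyclicD[OF assms(1)] by blast
  then have "return_set T y S \<noteq> {}"
    using furstenberg_family_nonempty[OF assms(2)] unfolding J_def W_def B_def by fastforce
  then obtain m where "(T ^^ m) y \<in> S"
    unfolding return_set_def by blast
  moreover have "return_set T ((T ^^ m) y) (V i) \<inter> A i \<in> \<F>" if "i \<in> I" for i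
    using y that unfolding return_set_funpow J_def W_def B_def by auto
  ultimately show "S \<inter> {x. \<forall>i\<in>I. return_set T x (V i) \<inter> A i \<in> \<F>} \<noteq> {}"
    by blast
qed

theorem proposition6p4:
  fixes T :: "'a::{real_vector, polish_space} \<Rightarrow> 'a"
    and \<F> :: "nat set set"
    and I :: "'i set"
    and A :: "'i \<Rightarrow> nat set"
    and V :: "'i \<Rightarrow> 'a set"
  assumes "tvs_ops_continuous TYPE('a)"
    and "infinite_dimensional TYPE('a)"
    and "furstenberg_family \<F>"
    and "linear T" and "continuous_on UNIV T"
    and "hered_F_hypercyclic \<F> T"
    and "countable I"
    and "\<forall>i\<in>I. A i \<in> \<F>"
    and "\<forall>i\<in>I. open (V i) \<and> V i \<noteq> {}"
  shows "closure {x. \<forall>i\<in>I. return_set T x (V i) \<inter> A i \<in> \<F>} = UNIV"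
proof (cases "I = {}")
  case True
  then show ?thesis by simp
next
  case False
  then have "\<F> \<noteq> {}"
    using assms(8) by blast
  obtain y where y: "hypercyclic_vector T y"
    using hered_F_hypercyclic_imp_hypercyclic_vector[OF assms(6,3) \<open>\<F> \<noteq> {}\<close>] by blast
  obtain e :: 'a where "e \<noteq> 0"
    using infinite_dimensional_ex_nonzero[OF assms(2)] by blast
  have open_infinite: "infinite U" if "open U" "U \<noteq> {}" for U :: "'a set"
    using tvs_open_nonempty_infinite[OF assms(1) \<open>e \<noteq> 0\<close> that] .
  have dense_range: "(T ^^ n) -` U \<noteq> {}" if "open U" "U \<noteq> {}" for n U
    using funpow_vimage_nonempty[OF hypercyclic_vector_return_set_infinite[OF y open_infinite that]] .
  have "\<forall>i\<in>I. open (V i) \<and> V i \<noteq> {} \<and> A i \<in> \<F>"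
    using assms(8,9) by blast
  with dense_range show ?thesis
    by (intro hered_F_hypercyclic_dense[OF assms(6,3) furstenberg_family_UNIV[OF assms(3) \<open>\<F> \<noteq> {}\<close>]
        assms(5) _ assms(7)])
qed

end
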